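(* Let $X$ be a complex base norm space with base $K$, equipped with its canonical base norm $|||\cdot|||$. Then the closed unit ball $\{u \in X : |||u||| \le 1\}$ equals the norm closure of the absolute convex hull of $K$, i.e. the closure of the set of all sums $\sum_{k=1}^n \alpha_k \varphi_k$ with $n\in\mathbb{N}$, $\varphi_k \in K$, $\alpha_k \in \mathbb{C}$ and $\sum_k |\alpha_k| \le 1$.
   Context: A real ordered vector space is a real vector space $Y$ with a proper cone $Y_+$ ($Y_+\cap(-Y_+)=\{0\}$). A base for $Y_+$ is a convex set $K\subseteq Y_+$ such that every nonzero $x \in Y_+$ can be written as $x = tk$ for a unique $t>0$ and unique $k\in K$. $Y$ is a real pre-base norm space if $Y_+$ has a base $K$, $Y = Y_+ - Y_+$, and $C={\rm co}(K\cup(-K))$ is linearly bounded (for each nonzero $x\in C$ there is $n\in\mathbb{N}$ with $nx\notin C$); its base norm is the Minkowski functional of $C$. A real base norm space is a real pre-base norm space whose cone $Y_+$ is closed in the base norm (and normed by the base norm). A complex $*$-vector space is a complex vector space with a conjugate-linear involution; $X_{\rm sa}$ denotes its selfadjoint elements. A complex base norm space is a complex $*$-vector space $X$ with a cone $X_+\subseteq X_{\rm sa}$ such that $(X_{\rm sa},X_+)$ is a real base norm space with base $K$, equipped with the canonical base norm $|||u||| = \inf \sum_{k=1}^n |\alpha_k|$, the infimum over all ways of writing $u=\sum_{k=1}^n \alpha_k \varphi_k$ with $\varphi_k\in K$, $\alpha_k\in\mathbb{C}$. *)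

theory Defs
  imports "HOL-Analysis.Analysis"
begin

text \<open>A complex vector space is encoded as a real vector space together with a
  real-linear map J (multiplication by the imaginary unit) with J (J x) = - x.\<close>

definition complex_structure :: "('a::real_vector \<Rightarrow> 'a) \<Rightarrow> bool" where
  "complex_structure J \<longleftrightarrow> linear J \<and> (\<forall>x. J (J x) = - x)"

definition cscale :: "('a::real_vector \<Rightarrow> 'a) \<Rightarrow> complex \<Rightarrow> 'a \<Rightarrow> 'a" where
  "cscale J c x = Re c *\<^sub>R x + Im c *\<^sub>R J x"

definition star_involution :: "('a::real_vector \<Rightarrow> 'a) \<Rightarrow> ('a \<Rightarrow> 'a) \<Rightarrow> bool" where
  "star_involution J st \<longleftrightarrow>
     (\<forall>x. st (st x) = x) \<and> (\<forall>x y. st (x + y) = st x + st y) \<and>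
     (\<forall>c x. st (cscale J c x) = cscale J (cnj c) (st x))"

definition selfadjoint :: "('a \<Rightarrow> 'a) \<Rightarrow> 'a set" where
  "selfadjoint st = {x. st x = x}"

definition proper_cone :: "'a::real_vector set \<Rightarrow> bool" where
  "proper_cone P \<longleftrightarrow> 0 \<in> P \<and> (\<forall>p\<in>P. \<forall>q\<in>P. p + q \<in> P) \<and>
     (\<forall>p\<in>P. \<forall>t::real. t \<ge> 0 \<longrightarrow> t *\<^sub>R p \<in> P) \<and> P \<inter> uminus ` P = {0}"

definition is_base :: "'a::real_vector set \<Rightarrow> 'a set \<Rightarrow> bool" where
  "is_base P K \<longleftrightarrow> convex K \<and> K \<subseteq> P \<and>
     (\<forall>x\<in>P. x \<noteq> 0 \<longrightarrow> (\<exists>!(t, k). t > (0::real) \<and> k \<in> K \<and> x = t *\<^sub>R k))"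

definition linearly_bounded :: "'a::real_vector set \<Rightarrow> bool" where
  "linearly_bounded C \<longleftrightarrow> (\<forall>x\<in>C. x \<noteq> 0 \<longrightarrow> (\<exists>n::nat. real n *\<^sub>R x \<notin> C))"

definition minkowski :: "'a::real_vector set \<Rightarrow> 'a \<Rightarrow> real" where
  "minkowski C x = Inf {t. t > 0 \<and> x \<in> (\<lambda>y. t *\<^sub>R y) ` C}"

definition base_set :: "'a::real_vector set \<Rightarrow> 'a set" where
  "base_set K = convex hull (K \<union> uminus ` K)"

definition real_base_norm_space :: "'a::real_vector set \<Rightarrow> 'a set \<Rightarrow> 'a set \<Rightarrow> bool" where
  "real_base_norm_space Y P K \<longleftrightarrow>
     P \<subseteq> Y \<and> proper_cone P \<and> is_base P K \<and> Y = {p - q | p q. p \<in> P \<and> q \<in> P} \<and>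
     linearly_bounded (base_set K) \<and>
     (\<forall>x\<in>Y. (\<forall>e>0. \<exists>p\<in>P. minkowski (base_set K) (x - p) < e) \<longrightarrow> x \<in> P)"

definition complex_base_norm_space ::
  "('a::real_vector \<Rightarrow> 'a) \<Rightarrow> ('a \<Rightarrow> 'a) \<Rightarrow> 'a set \<Rightarrow> 'a set \<Rightarrow> bool" where
  "complex_base_norm_space J st P K \<longleftrightarrow>
     complex_structure J \<and> star_involution J st \<and>
     real_base_norm_space (selfadjoint st) P K"

definition cbnorm :: "('a::real_vector \<Rightarrow> 'a) \<Rightarrow> 'a set \<Rightarrow> 'a \<Rightarrow> real" where
  "cbnorm J K u = Inf {(\<Sum>i<n. cmod (\<alpha> i)) | (n::nat) \<alpha> \<phi>.
      (\<forall>i<n. \<phi> i \<in> K) \<and> u = (\<Sum>i<n. cscale J (\<alpha> i) (\<phi> i))}"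

definition abs_convex_hull :: "('a::real_vector \<Rightarrow> 'a) \<Rightarrow> 'a set \<Rightarrow> 'a set" where
  "abs_convex_hull J K = {(\<Sum>i<n. cscale J (\<alpha> i) (\<phi> i)) | (n::nat) \<alpha> \<phi>.
      (\<forall>i<n. \<phi> i \<in> K) \<and> (\<Sum>i<n. cmod (\<alpha> i)) \<le> 1}"

definition cbn_closure :: "('a::real_vector \<Rightarrow> 'a) \<Rightarrow> 'a set \<Rightarrow> 'a set \<Rightarrow> 'a set" where
  "cbn_closure J K S = {u. \<forall>e>0. \<exists>v\<in>S. cbnorm J K (u - v) < e}"

end

theory Submission
  imports Defs
begin

(* Every u splits as a + J b with a = (u + st u)/2 and b selfadjoint, each selfadjoint element is
   a difference of two cone elements, and each cone element is a nonnegative multiple of a base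
   element. So every u is a finite combination of base elements, and |||u||| is the infimum of a
   nonempty set of weights sum |alpha_k|. Weights add when representations are concatenated and
   scale under complex multiples; hence the ball |||u||| <= 1 is closed, and shrinking a
   representation of weight below 1 + e by the factor 1/(1 + e) lands in the absolute convex
   hull at distance less than e. *)

lemma cscale_of_real [simp]: "cscale J (of_real r) x = r *\<^sub>R x"
  by (simp add: cscale_def)

lemma cscale_imaginary_unit [simp]: "cscale J \<i> x = J x"
  by (simp add: cscale_def)

lemma linear_cscale:
  assumes "linear J"
  shows "linear (cscale J c)"
  unfolding cscale_def
  using assms by (auto simp: linear_iff scaleR_add_right mult.commute)

lemma cscale_cscale:
  assumes "complex_structure J"
  shows "cscale J c (cscale J d x) = cscale J (c * d) x"
proof -
  have "linear J" and "J (J x) = - x"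
    using assms unfolding complex_structure_def by auto
  then have J_cscale: "J (cscale J d x) = Re d *\<^sub>R J x - Im d *\<^sub>R x"
    by (simp add: cscale_def linear_add linear_scale)
  have "cscale J c (cscale J d x) = Re c *\<^sub>R cscale J d x + Im c *\<^sub>R J (cscale J d x)"
    by (simp only: cscale_def[of J c])
  also have "\<dots> = cscale J (c * d) x"
    unfolding J_cscale by (simp add: cscale_def algebra_simps)
  finally show ?thesis .
qed

lemma star_involution_scaleR:
  assumes "star_involution J st"
  shows "st (r *\<^sub>R x) = r *\<^sub>R st x"
  using assms unfolding star_involution_def by (metis cscale_of_real complex_cnj_complex_of_real)

lemma star_involution_J:
  assumes "star_involution J st"
  shows "st (J x) = - J (st x)"
proof -
  have "st (J x) = cscale J (cnj \<i>) (st x)"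
    using assms unfolding star_involution_def by (metis cscale_imaginary_unit)
  then show ?thesis by (simp add: cscale_def)
qed

definition repr_weight :: "('a::real_vector \<Rightarrow> 'a) \<Rightarrow> 'a set \<Rightarrow> 'a \<Rightarrow> real \<Rightarrow> bool" where
  "repr_weight J K u s \<longleftrightarrow> (\<exists>(n::nat) \<alpha> \<phi>. (\<forall>i<n. \<phi> i \<in> K) \<and>
     u = (\<Sum>i<n. cscale J (\<alpha> i) (\<phi> i)) \<and> s = (\<Sum>i<n. cmod (\<alpha> i)))"

lemma cbnorm_eq_Inf_repr_weight: "cbnorm J K u = Inf {s. repr_weight J K u s}"
  unfolding cbnorm_def repr_weight_def by (rule arg_cong[where f = Inf]) blast

lemma abs_convex_hull_eq_repr_weight:
  "abs_convex_hull J K = {u. \<exists>s\<le>1. repr_weight J K u s}"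
  unfolding abs_convex_hull_def repr_weight_def by blast

lemma repr_weight_nonneg: "repr_weight J K u s \<Longrightarrow> s \<ge> 0"
  unfolding repr_weight_def by (auto intro: sum_nonneg)

lemma cbnorm_le_repr_weight: "repr_weight J K u s \<Longrightarrow> cbnorm J K u \<le> s"
  unfolding cbnorm_eq_Inf_repr_weight
  by (rule cInf_lower) (auto intro: bdd_belowI[where m = 0] dest: repr_weight_nonneg)

lemma repr_weight_zero: "repr_weight J K 0 0"
  unfolding repr_weight_def by (rule exI[of _ 0]) simp

lemma repr_weight_cscale_base: "k \<in> K \<Longrightarrow> repr_weight J K (cscale J c k) (cmod c)"
  unfolding repr_weight_def by (intro exI[of _ "Suc 0"] exI[of _ "\<lambda>_. c"] exI[of _ "\<lambda>_. k"]) simp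

lemma sum_lessThan_add: "(\<Sum>i<n + m::nat. f i) = (\<Sum>i<n. f i) + (\<Sum>i<m. f (n + i))"
  by (induction m) (simp_all add: add.assoc)

lemma repr_weight_add:
  assumes "repr_weight J K u s" and "repr_weight J K v t"
  shows "repr_weight J K (u + v) (s + t)"
proof -
  obtain n :: nat and \<alpha> \<phi> where \<phi>: "\<forall>i<n. \<phi> i \<in> K"
    and u: "u = (\<Sum>i<n. cscale J (\<alpha> i) (\<phi> i))" and s: "s = (\<Sum>i<n. cmod (\<alpha> i))"
    using assms(1) unfolding repr_weight_def by blast
  obtain m :: nat and \<beta> \<psi> where \<psi>: "\<forall>i<m. \<psi> i \<in> K"
    and v: "v = (\<Sum>i<m. cscale J (\<beta> i) (\<psi> i))" and t: "t = (\<Sum>i<m. cmod (\<beta> i))"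
    using assms(2) unfolding repr_weight_def by blast
  define \<gamma> where "\<gamma> i = (if i < n then \<alpha> i else \<beta> (i - n))" for i
  define \<theta> where "\<theta> i = (if i < n then \<phi> i else \<psi> (i - n))" for i
  have "\<forall>i<n + m. \<theta> i \<in> K"
    using \<phi> \<psi> by (auto simp: \<theta>_def)
  moreover have "u + v = (\<Sum>i<n + m. cscale J (\<gamma> i) (\<theta> i))"
    unfolding sum_lessThan_add u v \<gamma>_def \<theta>_def
    by (intro arg_cong2[where f = "(+)"] sum.cong) auto
  moreover have "s + t = (\<Sum>i<n + m. cmod (\<gamma> i))"
    unfolding sum_lessThan_add s t \<gamma>_def
    by (intro arg_cong2[where f = "(+)"] sum.cong) auto
  ultimately show ?thesis
    unfolding repr_weight_def by (intro exI[of _ "n + m"] exI[of _ \<gamma>] exI[of _ \<theta>]) simp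
qed

lemma repr_weight_cscale:
  assumes "complex_structure J" and "repr_weight J K u s"
  shows "repr_weight J K (cscale J c u) (cmod c * s)"
proof -
  obtain n :: nat and \<alpha> \<phi> where \<phi>: "\<forall>i<n. \<phi> i \<in> K"
    and u: "u = (\<Sum>i<n. cscale J (\<alpha> i) (\<phi> i))" and s: "s = (\<Sum>i<n. cmod (\<alpha> i))"
    using assms(2) unfolding repr_weight_def by blast
  have "linear (cscale J c)"
    using assms(1) unfolding complex_structure_def by (rule conjE) (rule linear_cscale)
  then have "cscale J c u = (\<Sum>i<n. cscale J c (cscale J (\<alpha> i) (\<phi> i)))"
    unfolding u by (rule linear_sum)
  also have "\<dots> = (\<Sum>i<n. cscale J (c * \<alpha> i) (\<phi> i))"
    by (simp only: cscale_cscale[OF assms(1)])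
  finally have "cscale J c u = (\<Sum>i<n. cscale J (c * \<alpha> i) (\<phi> i))" .
  moreover have "cmod c * s = (\<Sum>i<n. cmod (c * \<alpha> i))"
    unfolding s by (simp add: sum_distrib_left norm_mult)
  ultimately show ?thesis
    using \<phi> unfolding repr_weight_def by (intro exI[of _ n] exI[of _ "\<lambda>i. c * \<alpha> i"] exI[of _ \<phi>]) simp
qed

lemma repr_weight_scaleR:
  assumes "complex_structure J" and "repr_weight J K u s" and "r \<ge> 0"
  shows "repr_weight J K (r *\<^sub>R u) (r * s)"
  using repr_weight_cscale[OF assms(1,2), of "of_real r"] assms(3) by simp

lemma cone_repr_weight:
  assumes "is_base P K" and "x \<in> P"
  shows "\<exists>s. repr_weight J K x s"
proof (cases "x = 0")
  case True
  then show ?thesis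
    using repr_weight_zero by blast
next
  case False
  then obtain t k where "k \<in> K" and "t > 0" and "x = t *\<^sub>R k"
    using assms unfolding is_base_def by (auto dest!: ex1_implies_ex)
  then show ?thesis
    using repr_weight_cscale_base[of k K J "of_real t"] by auto
qed

lemma selfadjoint_repr_weight:
  assumes "complex_structure J" and "real_base_norm_space (selfadjoint st) P K"
    and "a \<in> selfadjoint st"
  shows "\<exists>s. repr_weight J K a s"
proof -
  have selfadjoint_eq: "selfadjoint st = {p - q | p q. p \<in> P \<and> q \<in> P}"
    using assms(2) unfolding real_base_norm_space_def by (elim conjE) assumption
  have base: "is_base P K"
    using assms(2) unfolding real_base_norm_space_def by (elim conjE) assumption
  obtain p q where "p \<in> P" and "q \<in> P" and "a = p - q"
    using assms(3) unfolding selfadjoint_eq by blast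
  then have a: "a = p + cscale J (- 1) q"
    by (simp add: cscale_def)
  obtain s t where p: "repr_weight J K p s" and q: "repr_weight J K q t"
    using cone_repr_weight[OF base \<open>p \<in> P\<close>] cone_repr_weight[OF base \<open>q \<in> P\<close>] by blast
  show ?thesis
    using repr_weight_add[OF p repr_weight_cscale[OF assms(1) q]] unfolding a by blast
qed

lemma selfadjoint_decomposition:
  assumes "complex_structure J" and "star_involution J st"
  obtains a b where "a \<in> selfadjoint st" and "b \<in> selfadjoint st" and "u = a + J b"
proof
  have J: "linear J" and JJ: "\<And>x. J (J x) = - x"
    using assms(1) unfolding complex_structure_def by auto
  have st_st: "st (st x) = x" and st_add: "st (x + y) = st x + st y" for x y
    using assms(2) unfolding star_involution_def by auto
  have st_diff: "st (x - y) = st x - st y" for x y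
    using st_add[of "x - y" y] by (simp add: algebra_simps)
  note st_scaleR = star_involution_scaleR[OF assms(2)] and st_J = star_involution_J[OF assms(2)]
  show "(1/2) *\<^sub>R (u + st u) \<in> selfadjoint st"
    unfolding selfadjoint_def by (simp add: st_scaleR st_add st_st add.commute)
  show "(- 1/2) *\<^sub>R J (u - st u) \<in> selfadjoint st"
    unfolding selfadjoint_def using J
    by (simp add: st_scaleR st_J st_diff st_st linear_diff)
  show "u = (1/2) *\<^sub>R (u + st u) + J ((- 1/2) *\<^sub>R J (u - st u))"
    using J by (simp add: linear_scale linear_diff JJ algebra_simps flip: scaleR_add_left)
qed

lemma repr_weight_exists:
  assumes "complex_base_norm_space J st P K"
  shows "\<exists>s. repr_weight J K u s"
proof -
  have J: "complex_structure J" and st: "star_involution J st"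
    and rbn: "real_base_norm_space (selfadjoint st) P K"
    using assms unfolding complex_base_norm_space_def by auto
  obtain a b where "a \<in> selfadjoint st" and "b \<in> selfadjoint st" and "u = a + J b"
    using selfadjoint_decomposition[OF J st] .
  then obtain s t where a: "repr_weight J K a s" and b: "repr_weight J K b t"
    using selfadjoint_repr_weight[OF J rbn] by blast
  show ?thesis
    using repr_weight_add[OF a repr_weight_cscale[OF J b, of \<i>]] \<open>u = a + J b\<close> by auto
qed

lemma cbnorm_lessD:
  assumes "complex_base_norm_space J st P K" and "cbnorm J K u < c"
  obtains s where "repr_weight J K u s" and "s < c"
  using cInf_lessD[of "{s. repr_weight J K u s}" c] repr_weight_exists[OF assms(1)] assms(2)
  unfolding cbnorm_eq_Inf_repr_weight by blast

lemma cbnorm_triangle: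
  assumes "complex_base_norm_space J st P K"
  shows "cbnorm J K (u + v) \<le> cbnorm J K u + cbnorm J K v"
proof (rule field_le_epsilon)
  fix e :: real
  assume "e > 0"
  then have "cbnorm J K u < cbnorm J K u + e/2" and "cbnorm J K v < cbnorm J K v + e/2"
    by simp_all
  then obtain s t where u: "repr_weight J K u s" and "s < cbnorm J K u + e/2"
    and v: "repr_weight J K v t" and "t < cbnorm J K v + e/2"
    by (meson cbnorm_lessD[OF assms])
  moreover have "cbnorm J K (u + v) \<le> s + t"
    using cbnorm_le_repr_weight[OF repr_weight_add[OF u v]] .
  ultimately show "cbnorm J K (u + v) \<le> cbnorm J K u + cbnorm J K v + e"
    by linarith
qed

lemma unit_ball_subset_cbn_closure:
  assumes "complex_base_norm_space J st P K" and "cbnorm J K u \<le> 1"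
  shows "u \<in> cbn_closure J K (abs_convex_hull J K)"
  unfolding cbn_closure_def abs_convex_hull_eq_repr_weight
proof (intro CollectI allI impI)
  have J: "complex_structure J"
    using assms(1) unfolding complex_base_norm_space_def by blast
  fix e :: real
  assume "e > 0"
  then have "cbnorm J K u < 1 + e"
    using assms(2) by simp
  then obtain s where u: "repr_weight J K u s" and "s < 1 + e"
    by (rule cbnorm_lessD[OF assms(1)])
  then have small: "s / (1 + e) < 1"
    using \<open>e > 0\<close> by simp
  define v where "v = (1 / (1 + e)) *\<^sub>R u"
  have "repr_weight J K v (s / (1 + e))"
    unfolding v_def using repr_weight_scaleR[OF J u, of "1 / (1 + e)"] \<open>e > 0\<close> by simp
  with small have v: "v \<in> {v. \<exists>s\<le>1. repr_weight J K v s}"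
    by (auto intro: less_imp_le)
  have "u - v = (1 - 1 / (1 + e)) *\<^sub>R u"
    unfolding v_def by (simp add: scaleR_diff_left)
  also have "1 - 1 / (1 + e) = e / (1 + e)"
    using \<open>e > 0\<close> by (simp add: field_simps)
  finally have "repr_weight J K (u - v) (e * (s / (1 + e)))"
    using repr_weight_scaleR[OF J u, of "e / (1 + e)"] \<open>e > 0\<close> by simp
  then have "cbnorm J K (u - v) \<le> e * (s / (1 + e))"
    by (rule cbnorm_le_repr_weight)
  also have "\<dots> < e"
    using mult_strict_left_mono[OF small \<open>e > 0\<close>] by simp
  finally show "\<exists>v\<in>{v. \<exists>s\<le>1. repr_weight J K v s}. cbnorm J K (u - v) < e"
    by (rule rev_bexI[OF v])
qed

lemma cbn_closure_subset_unit_ball: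
  assumes "complex_base_norm_space J st P K" and "u \<in> cbn_closure J K (abs_convex_hull J K)"
  shows "cbnorm J K u \<le> 1"
proof (rule field_le_epsilon)
  fix e :: real
  assume "e > 0"
  then obtain v where "v \<in> abs_convex_hull J K" and close: "cbnorm J K (u - v) < e"
    using assms(2) unfolding cbn_closure_def by blast
  then obtain s where v: "repr_weight J K v s" and "s \<le> 1"
    unfolding abs_convex_hull_eq_repr_weight by blast
  have "cbnorm J K u \<le> cbnorm J K v + cbnorm J K (u - v)"
    using cbnorm_triangle[OF assms(1), of v "u - v"] by simp
  also have "\<dots> \<le> s + e"
    using cbnorm_le_repr_weight[OF v] close by simp
  finally show "cbnorm J K u \<le> 1 + e"
    using \<open>s \<le> 1\<close> by simp
qed

theorem corollary3p1:
  fixes J st :: "'a::real_vector \<Rightarrow> 'a" and P K :: "'a set"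
  assumes "complex_base_norm_space J st P K"
  shows "{u. cbnorm J K u \<le> 1} = cbn_closure J K (abs_convex_hull J K)"
  using unit_ball_subset_cbn_closure[OF assms] cbn_closure_subset_unit_ball[OF assms] by blast

end
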